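(* Let $\alpha=\alpha(s)$ be a unit speed semi-real spatial quaternionic curve in $\mathbb{R}^3_1$. Then: (i) $\alpha$ is a semi-real spatial quaternionic rectifying curve with a spacelike rectifying plane if and only if, up to parametrization, $\alpha(t)=y(t)\frac{a}{\cos t}$ with $a>0$, where $y(t)$ is a unit speed spatial spacelike quaternionic curve lying in the pseudosphere $S^2_1(1)$; (ii) $\alpha$ is a semi-real spatial spacelike (timelike) quaternionic rectifying curve with a timelike rectifying plane and a spacelike (timelike) position vector if and only if, up to parametrization, $\alpha(t)=y(t)\frac{a}{\sinh t}$ with $a>0$, where $y(t)$ is a unit speed spatial timelike (spacelike) quaternionic curve lying in the pseudosphere $S^2_1(1)$ (pseudohyperbolic space $H^2_0(1)$); (iii) $\alpha$ is a semi-real spatial spacelike (timelike) quaternionic rectifying curve with a timelike rectifying plane and a timelike (spacelike) position vector if and only if, up to parametrization, $\alpha(t)=y(t)\frac{a}{\cosh t}$ with $a>0$, where $y(t)$ is a unit speed spatial spacelike (timelike) quaternionic curve lying in the pseudohyperbolic space $H^2_0(1)$ (pseudosphere $S^2_1(1)$).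
   Context: $\mathbb{R}^3_1$ is the semi-Euclidean (Minkowski) 3-space, identified with the semi-real spatial quaternions $q=q_1\mathbf{e}_1+q_2\mathbf{e}_2+q_3\mathbf{e}_3$, with inner product $h(p,q)=p_1q_1+p_2q_2-p_3q_3$ and norm $N(q)=\sqrt{|h(q,q)|}$. A vector $v$ is spacelike if $h(v,v)>0$ (or $v=0$) and timelike if $h(v,v)<0$; a curve is spacelike/timelike if its tangent is. The pseudosphere is $S^2_1(1)=\{x\in\mathbb{R}^3_1: h(x,x)=1\}$ and the pseudohyperbolic space is $H^2_0(1)=\{x\in\mathbb{R}^3_1: h(x,x)=-1\}$. For a unit speed curve with non-null Frenet frame $\{\mathbf{t},\mathbf{n}_1,\mathbf{n}_2\}$ (tangent, principal normal, binormal), the rectifying plane is the plane spanned by $\mathbf{t}$ and $\mathbf{n}_2$, and $\alpha$ is a rectifying curve if $\alpha(s)=\lambda(s)\mathbf{t}(s)+\mu(s)\mathbf{n}_2(s)$ for some differentiable functions $\lambda,\mu$. *)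

theory Defs
  imports "HOL-Analysis.Analysis"
begin

text \<open>Semi-Euclidean space R^3_1, identified with semi-real spatial quaternions
  q = q1 e1 + q2 e2 + q3 e3, represented by their coordinate vectors in real^3.\<close>

definition mink :: "real^3 \<Rightarrow> real^3 \<Rightarrow> real" where
  "mink p q = p$1 * q$1 + p$2 * q$2 - p$3 * q$3"

definition pseudosphere :: "(real^3) set" where
  "pseudosphere = {x. mink x x = 1}"

definition pseudohyperbolic :: "(real^3) set" where
  "pseudohyperbolic = {x. mink x x = -1}"

definition open_interval :: "real set \<Rightarrow> bool" where
  "open_interval I \<longleftrightarrow> open I \<and> is_interval I \<and> I \<noteq> {}"

definition vel :: "(real \<Rightarrow> real^3) \<Rightarrow> real \<Rightarrow> real^3" where
  "vel c t = vector_derivative c (at t)"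

definition unit_speed :: "(real \<Rightarrow> real^3) \<Rightarrow> real set \<Rightarrow> bool" where
  "unit_speed c I \<longleftrightarrow> (\<forall>t\<in>I. c differentiable (at t) \<and> \<bar>mink (vel c t) (vel c t)\<bar> = 1)"

definition spacelike_curve :: "(real \<Rightarrow> real^3) \<Rightarrow> real set \<Rightarrow> bool" where
  "spacelike_curve c I \<longleftrightarrow> (\<forall>t\<in>I. c differentiable (at t) \<and> mink (vel c t) (vel c t) > 0)"

definition timelike_curve :: "(real \<Rightarrow> real^3) \<Rightarrow> real set \<Rightarrow> bool" where
  "timelike_curve c I \<longleftrightarrow> (\<forall>t\<in>I. c differentiable (at t) \<and> mink (vel c t) (vel c t) < 0)"

definition nonnull_frenet_frame ::
  "(real \<Rightarrow> real^3) \<Rightarrow> real set \<Rightarrow> (real \<Rightarrow> real^3) \<Rightarrow> (real \<Rightarrow> real^3) \<Rightarrow> (real \<Rightarrow> real^3) \<Rightarrow> bool" where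
  "nonnull_frenet_frame c I T N1 N2 \<longleftrightarrow>
     (\<exists>\<kappa>. \<forall>s\<in>I.
        (c has_vector_derivative T s) (at s) \<and>
        (T has_vector_derivative (\<kappa> s *\<^sub>R N1 s)) (at s) \<and> \<kappa> s > 0 \<and>
        N1 differentiable (at s) \<and> N2 differentiable (at s) \<and>
        \<bar>mink (T s) (T s)\<bar> = 1 \<and> \<bar>mink (N1 s) (N1 s)\<bar> = 1 \<and> \<bar>mink (N2 s) (N2 s)\<bar> = 1 \<and>
        mink (T s) (N1 s) = 0 \<and> mink (T s) (N2 s) = 0 \<and> mink (N1 s) (N2 s) = 0)"

definition rectifying_curve ::
  "(real \<Rightarrow> real^3) \<Rightarrow> real set \<Rightarrow> (real \<Rightarrow> real^3) \<Rightarrow> (real \<Rightarrow> real^3) \<Rightarrow> bool" where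
  "rectifying_curve c I T N2 \<longleftrightarrow>
     (\<exists>lam mu :: real \<Rightarrow> real. \<forall>s\<in>I. lam differentiable (at s) \<and> mu differentiable (at s) \<and>
                 c s = lam s *\<^sub>R T s + mu s *\<^sub>R N2 s)"

text \<open>Causal character of the plane spanned by u, v (via the Gram matrix of the
  induced metric): spacelike = positive definite, timelike = Lorentzian.\<close>
definition spacelike_plane :: "real^3 \<Rightarrow> real^3 \<Rightarrow> bool" where
  "spacelike_plane u v \<longleftrightarrow> mink u u > 0 \<and> mink u u * mink v v - (mink u v)^2 > 0"

definition timelike_plane :: "real^3 \<Rightarrow> real^3 \<Rightarrow> bool" where
  "timelike_plane u v \<longleftrightarrow> mink u u * mink v v - (mink u v)^2 < 0"

definition reparam :: "(real \<Rightarrow> real) \<Rightarrow> real set \<Rightarrow> real set \<Rightarrow> bool" where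
  "reparam \<phi> J I \<longleftrightarrow> open_interval J \<and> bij_betw \<phi> J I \<and>
     (\<forall>t\<in>J. \<exists>d. (\<phi> has_real_derivative d) (at t) \<and> d \<noteq> 0)"

definition unit_speed_spacelike :: "(real \<Rightarrow> real^3) \<Rightarrow> real set \<Rightarrow> bool" where
  "unit_speed_spacelike y J \<longleftrightarrow> (\<forall>t\<in>J. y differentiable (at t) \<and> mink (vel y t) (vel y t) = 1)"

definition unit_speed_timelike :: "(real \<Rightarrow> real^3) \<Rightarrow> real set \<Rightarrow> bool" where
  "unit_speed_timelike y J \<longleftrightarrow> (\<forall>t\<in>J. y differentiable (at t) \<and> mink (vel y t) (vel y t) = -1)"

end

theory Submission
  imports Defs
begin

text \<open>Let \<open>\<epsilon> = h(T,T)\<close> and \<open>f = h(N\<^sub>2,N\<^sub>2)\<close>. Since \<open>h(\<alpha>,T)' = \<epsilon> + \<kappa> h(\<alpha>,N\<^sub>1)\<close>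
  and \<open>h(\<alpha>,\<alpha>)' = 2 h(\<alpha>,T)\<close>, the position vector lies in the rectifying plane iff
  \<open>h(\<alpha>,\<alpha>) = \<epsilon> (s + c)\<^sup>2 + K\<close>. Then \<open>K = f \<mu>\<^sup>2\<close> for the \<open>N\<^sub>2\<close>-coefficient \<open>\<mu>\<close> of \<open>\<alpha>\<close>, which
  cannot vanish since \<open>\<alpha> = (s + c) T\<close> is impossible, so \<open>K = f a\<^sup>2\<close> with \<open>a > 0\<close>.
  The substitution \<open>s + c = a S(t)/C(t)\<close>, \<open>y = (C/a) \<alpha>\<close>, where \<open>S' = C\<close>, \<open>C' = -\<epsilon> f S\<close> and
  \<open>\<epsilon> f S\<^sup>2 + C\<^sup>2 = k = \<plusminus>1\<close>, turns this quadratic law into \<open>h(y,y) = f k\<close> and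
  \<open>h(y',y') = \<epsilon> k\<close>; conversely these two equations force \<open>h(T,T) = \<epsilon>\<close> and the quadratic law.
  The pairs \<open>(S, C)\<close> = (sin, cos), (cosh, sinh), (sinh, cosh) give the five cases.\<close>

section \<open>The Minkowski form and non-null frames\<close>

interpretation mink: bounded_bilinear mink
proof
  show "\<exists>K. \<forall>a b. norm (mink a b) \<le> norm a * norm b * K"
  proof (intro exI allI)
    fix a b :: "real^3"
    have c: "\<And>i. \<bar>a$i\<bar> \<le> norm a" "\<And>i. \<bar>b$i\<bar> \<le> norm b" by (auto simp: component_le_norm_cart)
    have "\<bar>mink a b\<bar> \<le> \<bar>a$1\<bar>*\<bar>b$1\<bar> + \<bar>a$2\<bar>*\<bar>b$2\<bar> + \<bar>a$3\<bar>*\<bar>b$3\<bar>"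
      unfolding mink_def by (simp add: abs_mult[symmetric])
    also have "\<dots> \<le> norm a * norm b + norm a * norm b + norm a * norm b"
      by (intro add_mono mult_mono c) auto
    finally show "norm (mink a b) \<le> norm a * norm b * 3" by simp
  qed
qed (auto simp: mink_def algebra_simps)

lemma mink_commute: "mink p q = mink q p"
  by (simp add: mink_def algebra_simps)

declare mink.zero_left [simp] mink.zero_right [simp]

lemmas mink_linear = mink.add_left mink.add_right mink.diff_left mink.diff_right
  mink.scaleR_left mink.scaleR_right

lemma mink_has_real_derivative:
  assumes "(f has_vector_derivative f') (at x)" "(g has_vector_derivative g') (at x)"
  shows "((\<lambda>x. mink (f x) (g x)) has_real_derivative mink (f x) g' + mink f' (g x)) (at x)"
  using mink.has_vector_derivative[OF assms]
  by (simp add: has_real_derivative_iff_has_vector_derivative)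

definition mink_orthonormal :: "real^3 \<Rightarrow> real^3 \<Rightarrow> real^3 \<Rightarrow> bool" where
  "mink_orthonormal u v w \<longleftrightarrow> \<bar>mink u u\<bar> = 1 \<and> \<bar>mink v v\<bar> = 1 \<and> \<bar>mink w w\<bar> = 1 \<and>
     mink u v = 0 \<and> mink u w = 0 \<and> mink v w = 0"

text \<open>The Gram determinant of a non-null orthonormal triple is \<open>\<plusminus>1\<close>, so its coordinate
  determinant does not vanish.\<close>
lemma mink_orthonormal_orthogonal_eq_0:
  assumes "mink_orthonormal u v w" "mink x u = 0" "mink x v = 0" "mink x w = 0"
  shows "x = 0"
proof -
  define D where "D = u$1 * (v$2 * w$3 - v$3 * w$2) - u$2 * (v$1 * w$3 - v$3 * w$1)
    + u$3 * (v$1 * w$2 - v$2 * w$1)"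
  have "D * D = - (mink u u * mink v v * mink w w + 2 * mink u v * mink v w * mink u w
     - mink u u * (mink v w)^2 - mink v v * (mink u w)^2 - mink w w * (mink u v)^2)"
    unfolding D_def mink_def by algebra
  then have "D \<noteq> 0"
    using assms(1) by (auto simp: mink_orthonormal_def)
  moreover have "D * x$1 = 0" "D * x$2 = 0" "D * x$3 = 0"
    using assms(2-4) unfolding D_def mink_def by algebra+
  ultimately show ?thesis by (simp add: vec_eq_iff forall_3)
qed

lemma mink_orthonormal_expansion:
  assumes "mink_orthonormal u v w"
  shows "x = (mink u u * mink x u) *\<^sub>R u + (mink v v * mink x v) *\<^sub>R v +
    (mink w w * mink x w) *\<^sub>R w"
proof -
  have sq: "mink u u * mink u u = 1" "mink v v * mink v v = 1" "mink w w * mink w w = 1"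
    and o: "mink u v = 0" "mink u w = 0" "mink v w = 0" "mink v u = 0" "mink w u = 0" "mink w v = 0"
    using assms by (auto simp: mink_orthonormal_def abs_if mink_commute split: if_splits)
  let ?r = "x - ((mink u u * mink x u) *\<^sub>R u + (mink v v * mink x v) *\<^sub>R v +
    (mink w w * mink x w) *\<^sub>R w)"
  have "mink ?r u = 0" "mink ?r v = 0" "mink ?r w = 0"
    by (simp_all add: mink_linear o, simp_all add: algebra_simps sq)
  then have "?r = 0" by (rule mink_orthonormal_orthogonal_eq_0[OF assms])
  then show ?thesis by simp
qed

lemma nonnull_frenet_frame_tangent:
  "nonnull_frenet_frame \<alpha> I T N1 N2 \<Longrightarrow> s \<in> I \<Longrightarrow> (\<alpha> has_vector_derivative T s) (at s)"
  unfolding nonnull_frenet_frame_def by blast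

lemma nonnull_frenet_frame_orthonormal:
  "nonnull_frenet_frame \<alpha> I T N1 N2 \<Longrightarrow> s \<in> I \<Longrightarrow> mink_orthonormal (T s) (N1 s) (N2 s)"
  unfolding nonnull_frenet_frame_def mink_orthonormal_def by blast

lemma nonnull_frenet_frame_binormal_differentiable:
  "nonnull_frenet_frame \<alpha> I T N1 N2 \<Longrightarrow> s \<in> I \<Longrightarrow> N2 differentiable (at s)"
  unfolding nonnull_frenet_frame_def by blast

lemma open_interval_two_points:
  assumes "open_interval I"
  obtains s1 s2 where "s1 \<in> I" "s2 \<in> I" "s1 \<noteq> s2"
proof -
  from assms obtain s where "s \<in> I" "open I" unfolding open_interval_def by auto
  then obtain e where "e > 0" "ball s e \<subseteq> I" using openE by blast
  then have "s + e/2 \<in> I" by (auto simp: dist_real_def subset_iff)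
  with \<open>s \<in> I\<close> \<open>e > 0\<close> show ?thesis using that[of s "s + e/2"] by auto
qed

text \<open>Differentiating \<open>\<alpha> = (s + c) T\<close> gives \<open>(s + c) \<kappa> N\<^sub>1 = 0\<close>, which can hold at one
  parameter only.\<close>
lemma position_not_tangent_multiple:
  assumes I: "open_interval I" and F: "nonnull_frenet_frame \<alpha> I T N1 N2"
  shows "\<not> (\<forall>s\<in>I. \<alpha> s = (s + c) *\<^sub>R T s)"
proof
  assume eq: "\<forall>s\<in>I. \<alpha> s = (s + c) *\<^sub>R T s"
  obtain \<kappa> where \<kappa>: "\<And>s. s \<in> I \<Longrightarrow> (T has_vector_derivative \<kappa> s *\<^sub>R N1 s) (at s) \<and> 0 < \<kappa> s"
    using F unfolding nonnull_frenet_frame_def by blast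
  have "s + c = 0" if s: "s \<in> I" for s
  proof -
    have "((\<lambda>x. (x + c) *\<^sub>R T x) has_vector_derivative
        (s + c) *\<^sub>R (\<kappa> s *\<^sub>R N1 s) + 1 *\<^sub>R T s) (at s)"
      using \<kappa>[OF s] by (auto intro!: derivative_eq_intros)
    then have "(\<alpha> has_vector_derivative (s + c) *\<^sub>R (\<kappa> s *\<^sub>R N1 s) + T s) (at s)"
      using I s eq unfolding open_interval_def
      by (auto intro: has_vector_derivative_transform_within_open)
    then have "((s + c) * \<kappa> s) *\<^sub>R N1 s = 0"
      using vector_derivative_unique_at[OF nonnull_frenet_frame_tangent[OF F s]] by fastforce
    moreover have "N1 s \<noteq> 0"
      using nonnull_frenet_frame_orthonormal[OF F s] by (auto simp: mink_orthonormal_def)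
    ultimately show ?thesis using \<kappa>[OF s] by simp
  qed
  moreover obtain s1 s2 where "s1 \<in> I" "s2 \<in> I" "s1 \<noteq> s2"
    using open_interval_two_points[OF I] .
  ultimately show False by (metis add_right_cancel)
qed

section \<open>Real functions on intervals\<close>

lemma derivative_sign_change_imp_zero:
  fixes f f' :: "real \<Rightarrow> real"
  assumes "a < b"
    and der: "\<And>t. t \<in> {a..b} \<Longrightarrow> (f has_real_derivative f' t) (at t)"
    and "0 < f' a" and "f' b < 0"
  shows "\<exists>x\<in>{a<..<b}. f' x = 0"
proof -
  have "continuous_on {a..b} f"
    using der by (meson DERIV_isCont continuous_at_imp_continuous_on)
  then obtain x where x: "x \<in> {a..b}" and max: "\<And>y. y \<in> {a..b} \<Longrightarrow> f y \<le> f x"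
    using continuous_attains_sup[of "{a..b}" f] \<open>a < b\<close> by auto
  have "x \<noteq> a"
  proof
    assume "x = a"
    obtain d where "d > 0" and d: "\<And>h. 0 < h \<Longrightarrow> h < d \<Longrightarrow> f a < f (a + h)"
      using DERIV_pos_inc_right[OF der[of a] \<open>0 < f' a\<close>] \<open>a < b\<close> by auto
    define h where "h = min d (b - a) / 2"
    have "0 < h" "h < d" "a + h \<in> {a..b}"
      using \<open>d > 0\<close> \<open>a < b\<close> unfolding h_def by (auto simp: min_def field_simps)
    with d max[of "a + h"] \<open>x = a\<close> show False by fastforce
  qed
  moreover have "x \<noteq> b"
  proof
    assume "x = b"
    obtain d where "d > 0" and d: "\<And>h. 0 < h \<Longrightarrow> h < d \<Longrightarrow> f b < f (b - h)"
      using DERIV_neg_dec_left[OF der[of b] \<open>f' b < 0\<close>] \<open>a < b\<close> by auto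
    define h where "h = min d (b - a) / 2"
    have "0 < h" "h < d" "b - h \<in> {a..b}"
      using \<open>d > 0\<close> \<open>a < b\<close> unfolding h_def by (auto simp: min_def field_simps)
    with d max[of "b - h"] \<open>x = b\<close> show False by fastforce
  qed
  ultimately have x': "x \<in> {a<..<b}" using x by auto
  have "f' x = 0"
  proof (rule DERIV_local_max[OF der])
    show "0 < min (x - a) (b - x)" using x' by simp
    show "\<forall>y. \<bar>x - y\<bar> < min (x - a) (b - x) \<longrightarrow> f y \<le> f x"
    proof (intro allI impI)
      fix y assume "\<bar>x - y\<bar> < min (x - a) (b - x)"
      then have "y \<in> {a..b}" by (simp add: abs_less_iff)
      then show "f y \<le> f x" by (rule max)
    qed
  qed (use x in auto)
  with x' show ?thesis by blast
qed

lemma nonzero_derivative_sign_constant: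
  fixes f f' :: "real \<Rightarrow> real"
  assumes "is_interval J"
    and der: "\<And>t. t \<in> J \<Longrightarrow> (f has_real_derivative f' t) (at t)"
    and nz: "\<And>t. t \<in> J \<Longrightarrow> f' t \<noteq> 0"
  shows "(\<forall>t\<in>J. 0 < f' t) \<or> (\<forall>t\<in>J. f' t < 0)"
proof (rule ccontr)
  assume "\<not> ?thesis"
  then obtain p q where "p \<in> J" "\<not> f' p < 0" "q \<in> J" "\<not> 0 < f' q"
    by auto
  with nz[of p] nz[of q] have pq: "p \<in> J" "q \<in> J" "0 < f' p" "f' q < 0"
    by linarith+
  then have "p \<noteq> q" by auto
  then consider "p < q" | "q < p" by linarith
  then show False
  proof cases
    case 1
    have "{p..q} \<subseteq> J"
      using mem_is_interval_1_I[OF \<open>is_interval J\<close>] pq(1,2) by (meson atLeastAtMost_iff subsetI)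
    then obtain x where "x \<in> {p<..<q}" "f' x = 0"
      using derivative_sign_change_imp_zero[OF 1, of f f'] der pq(3,4) by blast
    moreover have "x \<in> J" using \<open>{p..q} \<subseteq> J\<close> \<open>x \<in> {p<..<q}\<close> by auto
    ultimately show False using nz by blast
  next
    case 2
    have "{q..p} \<subseteq> J"
      using mem_is_interval_1_I[OF \<open>is_interval J\<close>] pq(1,2) by (meson atLeastAtMost_iff subsetI)
    then have "\<And>t. t \<in> {q..p} \<Longrightarrow> ((\<lambda>t. - f t) has_real_derivative - f' t) (at t)"
      using der by (intro DERIV_minus) (auto simp: subset_iff)
    then obtain x where "x \<in> {q<..<p}" "f' x = 0"
      using derivative_sign_change_imp_zero[OF 2, of "\<lambda>t. - f t" "\<lambda>t. - f' t"] pq(3,4) by auto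
    moreover have "x \<in> J" using \<open>{q..p} \<subseteq> J\<close> \<open>x \<in> {q<..<p}\<close> by auto
    ultimately show False using nz by simp
  qed
qed

lemma same_derivative_imp_diff_const:
  fixes f g D :: "real \<Rightarrow> real"
  assumes "convex S"
    and "\<And>x. x \<in> S \<Longrightarrow> (f has_real_derivative D x) (at x)"
    and "\<And>x. x \<in> S \<Longrightarrow> (g has_real_derivative D x) (at x)"
  obtains c where "\<And>x. x \<in> S \<Longrightarrow> f x = g x + c"
proof -
  have "\<exists>c. \<forall>x\<in>S. f x - g x = c"
  proof (rule has_field_derivative_zero_constant[OF \<open>convex S\<close>])
    fix x assume "x \<in> S"
    show "((\<lambda>x. f x - g x) has_real_derivative 0) (at x within S)"
      using DERIV_diff[OF assms(2,3)[OF \<open>x \<in> S\<close>]] by (simp add: has_field_derivative_at_within)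
  qed
  then show ?thesis using that by (metis diff_add_cancel add.commute)
qed

lemma derivative_unique_on_open:
  fixes f g :: "real \<Rightarrow> real"
  assumes "open S" "t \<in> S" "\<And>x. x \<in> S \<Longrightarrow> f x = g x"
    and "(f has_real_derivative d) (at t)" "(g has_real_derivative e) (at t)"
  shows "d = e"
proof -
  have "(g has_real_derivative d) (at t)"
    using has_field_derivative_transform_within_open[OF assms(4,1,2)] assms(3) by blast
  with assms(5) show ?thesis by (rule DERIV_unique[rotated])
qed

lemma unit_sign_cancel:
  fixes d q h e :: real
  assumes "d * h = e * q" "\<bar>h\<bar> = 1" "e * e = 1" "0 < d" "0 < q"
  shows "h = e \<and> d = q"
proof -
  have "h = 1 \<or> h = -1" "e = 1 \<or> e = -1"
    using assms(2,3) by (auto simp: square_eq_1_iff abs_if split: if_splits)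
  then show ?thesis using assms(1,4,5) by auto
qed

lemma derivative_sq_eq_imp_signed_primitive:
  fixes \<phi> \<phi>' G P :: "real \<Rightarrow> real"
  assumes J: "is_interval J"
    and \<phi>': "\<And>t. t \<in> J \<Longrightarrow> (\<phi> has_real_derivative \<phi>' t) (at t) \<and> \<phi>' t \<noteq> 0"
    and G: "\<And>t. t \<in> J \<Longrightarrow> (G has_real_derivative P t) (at t)"
    and P: "\<And>t. t \<in> J \<Longrightarrow> 0 < P t" and sq: "\<And>t. t \<in> J \<Longrightarrow> (\<phi>' t)^2 = (P t)^2"
  shows "\<exists>\<sigma> d. \<sigma> * \<sigma> = 1 \<and> (\<forall>t\<in>J. \<phi> t = \<sigma> * G t + d)"
proof -
  obtain \<sigma> where \<sigma>: "\<sigma> * \<sigma> = 1" "\<And>t. t \<in> J \<Longrightarrow> \<phi>' t = \<sigma> * P t"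
  proof -
    from nonzero_derivative_sign_constant[OF J, of \<phi> \<phi>'] \<phi>'
    consider "\<forall>t\<in>J. 0 < \<phi>' t" | "\<forall>t\<in>J. \<phi>' t < 0" by blast
    then show thesis
    proof cases
      case 1
      then have "\<phi>' t = 1 * P t" if "t \<in> J" for t
        using sq[OF that] P[OF that] that by (auto simp: power2_eq_iff)
      then show thesis using that[of 1] by simp
    next
      case 2
      then have "\<phi>' t = -1 * P t" if "t \<in> J" for t
        using sq[OF that] P[OF that] that by (auto simp: power2_eq_iff)
      then show thesis using that[of "-1"] by simp
    qed
  qed
  have "((\<lambda>t. \<sigma> * G t) has_real_derivative \<phi>' t) (at t)" if "t \<in> J" for t
    using DERIV_cmult[OF G[OF that], of \<sigma>] \<sigma>(2)[OF that] by simp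
  then obtain d where "\<And>t. t \<in> J \<Longrightarrow> \<phi> t = \<sigma> * G t + d"
    using same_derivative_imp_diff_const[of J \<phi> \<phi>' "\<lambda>t. \<sigma> * G t"] J \<phi>'
    by (metis is_interval_convex_1)
  with \<sigma>(1) show ?thesis by blast
qed

section \<open>Rectifying curves and the quadratic position law\<close>

lemma rectifying_imp_quadratic_position:
  assumes I: "open_interval I" and F: "nonnull_frenet_frame \<alpha> I T N1 N2"
    and eT: "\<And>s. s \<in> I \<Longrightarrow> mink (T s) (T s) = \<epsilon>" and \<epsilon>: "\<epsilon> * \<epsilon> = 1"
    and R: "rectifying_curve \<alpha> I T N2"
  obtains c K where "\<And>s. s \<in> I \<Longrightarrow> mink (\<alpha> s) (\<alpha> s) = \<epsilon> * (s + c)^2 + K"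
proof -
  have "convex I" using I by (simp add: open_interval_def is_interval_convex_1)
  obtain \<kappa> where \<kappa>: "\<And>s. s \<in> I \<Longrightarrow> (T has_vector_derivative \<kappa> s *\<^sub>R N1 s) (at s)"
    using F unfolding nonnull_frenet_frame_def by blast
  note \<alpha>' = nonnull_frenet_frame_tangent[OF F]
  have "mink (\<alpha> s) (N1 s) = 0" if "s \<in> I" for s
    using R nonnull_frenet_frame_orthonormal[OF F that] that
    by (auto simp: rectifying_curve_def mink_orthonormal_def mink_linear mink_commute)
  then have "((\<lambda>s. mink (\<alpha> s) (T s)) has_real_derivative \<epsilon>) (at s)" if "s \<in> I" for s
    using mink_has_real_derivative[OF \<alpha>'[OF that] \<kappa>[OF that]] that eT by (simp add: mink_linear)
  then obtain c0 where c0: "\<And>s. s \<in> I \<Longrightarrow> mink (\<alpha> s) (T s) = \<epsilon> * s + c0"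
    by (rule same_derivative_imp_diff_const[OF \<open>convex I\<close>, of _ _ "\<lambda>s. \<epsilon> * s"])
      (auto intro!: derivative_eq_intros)
  have "((\<lambda>s. mink (\<alpha> s) (\<alpha> s)) has_real_derivative 2 * (\<epsilon> * s + c0)) (at s)" if "s \<in> I" for s
    using mink_has_real_derivative[OF \<alpha>'[OF that] \<alpha>'[OF that]] c0[OF that]
    by (simp add: mink_commute)
  moreover have "((\<lambda>s. \<epsilon> * (s + \<epsilon> * c0)^2) has_real_derivative 2 * (\<epsilon> * s + c0)) (at s)" for s
    using \<epsilon> by (auto intro!: derivative_eq_intros simp: algebra_simps)
  ultimately obtain K where "\<And>s. s \<in> I \<Longrightarrow> mink (\<alpha> s) (\<alpha> s) = \<epsilon> * (s + \<epsilon> * c0)^2 + K"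
    by (rule same_derivative_imp_diff_const[OF \<open>convex I\<close>]) auto
  then show ?thesis by (rule that)
qed

lemma quadratic_position_tangent_component:
  assumes I: "open_interval I" and F: "nonnull_frenet_frame \<alpha> I T N1 N2"
    and H: "\<And>s. s \<in> I \<Longrightarrow> mink (\<alpha> s) (\<alpha> s) = \<epsilon> * (s + c)^2 + K" and s: "s \<in> I"
  shows "mink (\<alpha> s) (T s) = \<epsilon> * (s + c)"
proof -
  note \<alpha>' = nonnull_frenet_frame_tangent[OF F s]
  have "2 * mink (\<alpha> s) (T s) = 2 * (\<epsilon> * (s + c))"
  proof (rule derivative_unique_on_open)
    show "open I" using I by (simp add: open_interval_def)
    show "((\<lambda>s. mink (\<alpha> s) (\<alpha> s)) has_real_derivative 2 * mink (\<alpha> s) (T s)) (at s)"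
      using mink_has_real_derivative[OF \<alpha>' \<alpha>'] by (simp add: mink_commute)
    show "((\<lambda>s. \<epsilon> * (s + c)^2 + K) has_real_derivative 2 * (\<epsilon> * (s + c))) (at s)"
      by (auto intro!: derivative_eq_intros)
  qed (use H s in auto)
  then show ?thesis by simp
qed

lemma quadratic_position_decomposition:
  assumes I: "open_interval I" and F: "nonnull_frenet_frame \<alpha> I T N1 N2"
    and eT: "\<And>s. s \<in> I \<Longrightarrow> mink (T s) (T s) = \<epsilon>" and \<epsilon>: "\<epsilon> * \<epsilon> = 1"
    and H: "\<And>s. s \<in> I \<Longrightarrow> mink (\<alpha> s) (\<alpha> s) = \<epsilon> * (s + c)^2 + K" and s: "s \<in> I"
  shows "\<alpha> s = (s + c) *\<^sub>R T s + (mink (N2 s) (N2 s) * mink (\<alpha> s) (N2 s)) *\<^sub>R N2 s"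
proof -
  obtain \<kappa> where \<kappa>: "\<And>s. s \<in> I \<Longrightarrow> (T has_vector_derivative \<kappa> s *\<^sub>R N1 s) (at s) \<and> 0 < \<kappa> s"
    using F unfolding nonnull_frenet_frame_def by blast
  have \<alpha>T: "mink (\<alpha> s) (T s) = \<epsilon> * (s + c)" if "s \<in> I" for s
    using I F H that by (rule quadratic_position_tangent_component)
  have "\<kappa> s * mink (\<alpha> s) (N1 s) + \<epsilon> = \<epsilon>"
  proof (rule derivative_unique_on_open)
    show "open I" using I by (simp add: open_interval_def)
    show "((\<lambda>s. mink (\<alpha> s) (T s)) has_real_derivative \<kappa> s * mink (\<alpha> s) (N1 s) + \<epsilon>) (at s)"
      using mink_has_real_derivative[OF nonnull_frenet_frame_tangent[OF F s] conjunct1[OF \<kappa>[OF s]]]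
        eT[OF s]
      by (simp add: mink_linear)
    show "((\<lambda>s. \<epsilon> * (s + c)) has_real_derivative \<epsilon>) (at s)"
      by (auto intro!: derivative_eq_intros)
  qed (use \<alpha>T s in auto)
  then have "mink (\<alpha> s) (N1 s) = 0" using \<kappa>[OF s] by simp
  then show ?thesis
    using mink_orthonormal_expansion[OF nonnull_frenet_frame_orthonormal[OF F s], of "\<alpha> s"]
      eT[OF s] \<alpha>T[OF s] \<epsilon>
    by (simp add: mult.assoc[symmetric])
qed

lemma quadratic_position_imp_rectifying:
  assumes I: "open_interval I" and F: "nonnull_frenet_frame \<alpha> I T N1 N2"
    and eT: "\<And>s. s \<in> I \<Longrightarrow> mink (T s) (T s) = \<epsilon>" and \<epsilon>: "\<epsilon> * \<epsilon> = 1"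
    and H: "\<And>s. s \<in> I \<Longrightarrow> mink (\<alpha> s) (\<alpha> s) = \<epsilon> * (s + c)^2 + K"
  shows "rectifying_curve \<alpha> I T N2" and "\<And>s. s \<in> I \<Longrightarrow> 0 < K * mink (N2 s) (N2 s)"
proof -
  note ON = nonnull_frenet_frame_orthonormal[OF F]
  define \<mu> where "\<mu> s = mink (N2 s) (N2 s) * mink (\<alpha> s) (N2 s)" for s
  have dec: "\<alpha> s = (s + c) *\<^sub>R T s + \<mu> s *\<^sub>R N2 s" if "s \<in> I" for s
    unfolding \<mu>_def using I F eT \<epsilon> H that by (rule quadratic_position_decomposition)
  have "\<mu> differentiable (at s)" if s: "s \<in> I" for s
  proof -
    obtain N2' where N2': "(N2 has_vector_derivative N2') (at s)"
      using nonnull_frenet_frame_binormal_differentiable[OF F s]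
      by (auto simp: vector_derivative_works)
    have "\<exists>d. (\<mu> has_real_derivative d) (at s)"
      unfolding \<mu>_def
      using DERIV_mult[OF mink_has_real_derivative[OF N2' N2']
          mink_has_real_derivative[OF nonnull_frenet_frame_tangent[OF F s] N2']]
      by blast
    then show ?thesis
      by (auto intro: differentiableI simp: has_field_derivative_def)
  qed
  with dec show "rectifying_curve \<alpha> I T N2"
    unfolding rectifying_curve_def by (intro exI[of _ "\<lambda>s. s + c"] exI[of _ \<mu>]) auto
  have K: "K = mink (N2 s) (N2 s) * (\<mu> s)^2" if s: "s \<in> I" for s
  proof -
    have "mink (\<alpha> s) (\<alpha> s) = \<epsilon> * (s + c)^2 + mink (N2 s) (N2 s) * (\<mu> s)^2"
      using dec[OF s] eT[OF s] ON[OF s]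
      by (simp add: mink_linear mink_commute mink_orthonormal_def power2_eq_square algebra_simps)
    then show ?thesis using H[OF s] by simp
  qed
  have "K \<noteq> 0"
  proof
    assume "K = 0"
    then have "\<mu> s = 0" if "s \<in> I" for s
      using K[OF that] ON[OF that] by (auto simp: mink_orthonormal_def)
    then show False
      using position_not_tangent_multiple[OF I F, of c] dec by auto
  qed
  show "0 < K * mink (N2 s) (N2 s)" if s: "s \<in> I" for s
  proof -
    have "K * mink (N2 s) (N2 s) = (\<mu> s)^2"
      using K[OF s] ON[OF s] by (auto simp: mink_orthonormal_def abs_if split: if_splits)
    moreover have "\<mu> s \<noteq> 0" using K[OF s] \<open>K \<noteq> 0\<close> by auto
    ultimately show ?thesis by simp
  qed
qed

lemma rectifying_spacelike_plane_position_spacelike: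
  assumes I: "open_interval I" and F: "nonnull_frenet_frame \<alpha> I T N1 N2"
    and R: "rectifying_curve \<alpha> I T N2"
    and TN: "\<forall>s\<in>I. mink (T s) (T s) = 1 \<and> mink (N2 s) (N2 s) = 1" and s: "s \<in> I"
  shows "0 < mink (\<alpha> s) (\<alpha> s)"
proof -
  have eT: "\<And>s. s \<in> I \<Longrightarrow> mink (T s) (T s) = 1" using TN by blast
  obtain c K where H: "\<And>s. s \<in> I \<Longrightarrow> mink (\<alpha> s) (\<alpha> s) = 1 * (s + c)^2 + K"
    using rectifying_imp_quadratic_position[OF I F eT mult_1 R] by blast
  have "0 < K * mink (N2 s) (N2 s)"
    using I F eT mult_1 H s by (rule quadratic_position_imp_rectifying(2))
  then show ?thesis using H[OF s] TN s by (simp add: add_nonneg_pos)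
qed

section \<open>Generalized trigonometric pairs\<close>

text \<open>\<open>(S, C)\<close> abstracts (sin, cos), (cosh, sinh) and (sinh, cosh); the quotient \<open>S/C\<close> plays
  the role of tan, coth and tanh respectively.\<close>
definition trig_pair :: "real \<Rightarrow> real \<Rightarrow> (real \<Rightarrow> real) \<Rightarrow> (real \<Rightarrow> real) \<Rightarrow> bool" where
  "trig_pair \<rho> k S C \<longleftrightarrow> (\<forall>t. (S has_real_derivative C t) (at t) \<and>
     (C has_real_derivative - \<rho> * S t) (at t) \<and> \<rho> * (S t)^2 + (C t)^2 = k)"

lemma trig_pairD:
  assumes "trig_pair \<rho> k S C"
  shows "(S has_real_derivative C t) (at t)" "(C has_real_derivative - \<rho> * S t) (at t)"
    "\<rho> * (S t)^2 + (C t)^2 = k"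
  using assms by (auto simp: trig_pair_def)

text \<open>Since \<open>\<rho> (S/C)\<^sup>2 + 1 = k/C\<^sup>2\<close>, the quotient takes its values
  in \<open>{u. 0 < k (\<rho> u\<^sup>2 + 1)}\<close>, which is where \<open>\<psi>\<close> is required to be defined.\<close>
definition trig_quotient_inverse ::
  "(real \<Rightarrow> real) \<Rightarrow> real set \<Rightarrow> real \<Rightarrow> real \<Rightarrow> (real \<Rightarrow> real) \<Rightarrow> (real \<Rightarrow> real) \<Rightarrow> bool" where
  "trig_quotient_inverse \<psi> D \<rho> k S C \<longleftrightarrow> open D \<and>
     (\<forall>t\<in>D. C t \<noteq> 0 \<and> \<psi> (S t / C t) = t) \<and>
     (\<forall>u. 0 < k * (\<rho> * u^2 + 1) \<longrightarrow> \<psi> u \<in> D \<and> S (\<psi> u) = u * C (\<psi> u)) \<and>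
     continuous_on {u. 0 < k * (\<rho> * u^2 + 1)} \<psi>"

lemma trig_pair_sin_cos: "trig_pair 1 1 sin cos"
  unfolding trig_pair_def by (auto intro!: derivative_eq_intros)

lemma trig_pair_cosh_sinh: "trig_pair (-1) (-1) cosh sinh"
  unfolding trig_pair_def by (auto intro!: derivative_eq_intros simp: cosh_square_eq)

lemma trig_pair_sinh_cosh: "trig_pair (-1) 1 sinh cosh"
  unfolding trig_pair_def by (auto intro!: derivative_eq_intros simp: cosh_square_eq)

lemma tanh_artanh_real:
  fixes x :: real assumes "\<bar>x\<bar> < 1" shows "tanh (artanh x) = x"
proof -
  define q where "q = (1 + x) / (1 - x)"
  have q: "q > 0" using assms by (auto simp: q_def)
  have "exp (- 2 * artanh x) = 1 / q"
    using q by (simp add: artanh_def q_def[symmetric] exp_minus exp_ln inverse_eq_divide)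
  then have "tanh (artanh x) = (1 - 1/q) / (1 + 1/q)" by (simp add: tanh_real_altdef)
  also have "\<dots> = x" using assms q by (simp add: q_def field_simps)
  finally show ?thesis .
qed

lemma trig_quotient_inverse_arctan: "trig_quotient_inverse arctan {-(pi/2)<..<pi/2} 1 1 sin cos"
  unfolding trig_quotient_inverse_def
proof (intro conjI ballI allI impI)
  fix t :: real assume "t \<in> {-(pi/2)<..<pi/2}"
  then show "cos t \<noteq> 0" "arctan (sin t / cos t) = t"
    using cos_gt_zero_pi[of t] arctan_tan[of t] by (auto simp: tan_def)
next
  fix u :: real
  show "arctan u \<in> {-(pi/2)<..<pi/2}" using arctan_lbound arctan_ubound by auto
  show "sin (arctan u) = u * cos (arctan u)"
    using cos_arctan_not_zero[of u] tan_arctan[of u] by (simp add: tan_def field_simps)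
qed (auto intro: continuous_intros)

lemma trig_quotient_inverse_coth:
  "trig_quotient_inverse (\<lambda>u. artanh (1 / u)) (- {0}) (-1) (-1) cosh sinh"
  unfolding trig_quotient_inverse_def
proof (intro conjI ballI allI impI)
  fix t :: real assume "t \<in> - {0}"
  then show "sinh t \<noteq> 0" "artanh (1 / (cosh t / sinh t)) = t"
    by (auto simp: tanh_def[symmetric] artanh_tanh_real)
next
  fix u :: real assume "0 < - 1 * (- 1 * u^2 + 1)"
  then have "1 < \<bar>u\<bar>" using abs_square_le_1[of u] by simp
  then have u: "\<bar>1 / u\<bar> < 1" "u \<noteq> 0" by auto
  show "artanh (1 / u) \<in> - {0}" using tanh_artanh_real[OF u(1)] u(2) by auto
  show "cosh (artanh (1 / u)) = u * sinh (artanh (1 / u))"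
    using tanh_artanh_real[OF u(1)] u(2) by (simp add: tanh_def field_simps)
next
  have "1 / u \<in> {-1<..<1}" if "1 < u^2" for u :: real
  proof -
    have "1 < \<bar>u\<bar>" using that abs_square_le_1[of u] by simp
    then have "\<bar>1 / u\<bar> < 1" by auto
    then show ?thesis unfolding greaterThanLessThan_iff by linarith
  qed
  then show "continuous_on {u::real. 0 < - 1 * (- 1 * u^2 + 1)} (\<lambda>u. artanh (1 / u))"
    by (intro continuous_intros) auto
qed (simp add: open_Compl)

lemma trig_quotient_inverse_tanh: "trig_quotient_inverse artanh UNIV (-1) 1 sinh cosh"
  unfolding trig_quotient_inverse_def
proof (intro conjI ballI allI impI)
  fix t :: real
  show "cosh t \<noteq> 0" "artanh (sinh t / cosh t) = t"
    by (auto simp: tanh_def[symmetric] artanh_tanh_real)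
next
  fix u :: real assume "0 < 1 * (- 1 * u^2 + 1)"
  then have u: "\<bar>u\<bar> < 1" by (simp add: abs_square_less_1[symmetric])
  show "sinh (artanh u) = u * cosh (artanh u)"
    using tanh_artanh_real[OF u] by (simp add: tanh_def field_simps)
next
  show "continuous_on {u::real. 0 < 1 * (- 1 * u^2 + 1)} artanh"
    by (rule continuous_on_artanh) (auto simp: abs_square_less_1 abs_less_iff)
qed simp_all

lemma trig_pair_quotient_derivative:
  assumes "trig_pair \<rho> k S C" "C t \<noteq> 0"
  shows "((\<lambda>t. S t / C t) has_real_derivative k / (C t)^2) (at t)"
proof -
  have "((\<lambda>t. S t / C t) has_real_derivative (C t * C t - S t * (- \<rho> * S t)) / (C t * C t)) (at t)"
    using assms by (intro DERIV_divide trig_pairD) auto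
  moreover have "C t * C t - S t * (- \<rho> * S t) = k"
    using trig_pairD(3)[OF assms(1), of t] by (simp add: power2_eq_square algebra_simps)
  ultimately show ?thesis by (simp add: power2_eq_square)
qed

section \<open>Rectifying curves as scaled curves\<close>

lemma reparam_of_inverse:
  assumes I: "open_interval I" and "open D" and "continuous_on I \<psi>"
    and inv1: "\<And>s. s \<in> I \<Longrightarrow> \<psi> s \<in> D \<and> \<phi> (\<psi> s) = s"
    and inv2: "\<And>t. t \<in> D \<Longrightarrow> \<phi> t \<in> I \<Longrightarrow> \<psi> (\<phi> t) = t"
    and der: "\<And>t. t \<in> D \<Longrightarrow> (\<phi> has_real_derivative \<phi>' t) (at t) \<and> \<phi>' t \<noteq> 0"
  shows "reparam \<phi> (\<psi> ` I) I" and "\<psi> ` I = D \<inter> \<phi> -` I"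
proof -
  show J: "\<psi> ` I = D \<inter> \<phi> -` I"
    using inv1 inv2 by (auto simp: image_iff) (metis)
  have "continuous_on D \<phi>"
    using der by (meson DERIV_isCont continuous_at_imp_continuous_on)
  then have "open (\<psi> ` I)"
    unfolding J using \<open>open D\<close> I by (auto simp: open_interval_def intro: continuous_open_preimage)
  moreover have "is_interval (\<psi> ` I)"
    using connected_continuous_image[OF \<open>continuous_on I \<psi>\<close>] I
    by (simp add: open_interval_def is_interval_connected_1)
  moreover have "\<psi> ` I \<noteq> {}" using I by (simp add: open_interval_def)
  moreover have "bij_betw \<phi> (\<psi> ` I) I"
    by (rule bij_betw_byWitness[where f' = \<psi>]) (use inv1 in auto)
  ultimately show "reparam \<phi> (\<psi> ` I) I"
    unfolding reparam_def open_interval_def using der inv1 by blast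
qed

lemma quadratic_position_scaled_curve_speed:
  assumes I: "open_interval I" and F: "nonnull_frenet_frame \<alpha> I T N1 N2"
    and eT: "\<And>s. s \<in> I \<Longrightarrow> mink (T s) (T s) = \<epsilon>"
    and H: "\<And>s. s \<in> I \<Longrightarrow> mink (\<alpha> s) (\<alpha> s) = \<epsilon> * (s + c)^2 + f * a^2" and "0 < a"
    and units: "\<epsilon> * \<epsilon> = 1" "f * f = 1" "k * k = 1" and trig: "trig_pair (\<epsilon> * f) k S C"
    and \<phi>: "\<phi> = (\<lambda>t. a * (S t / C t) - c)" and y: "y = (\<lambda>t. (C t / a) *\<^sub>R \<alpha> (\<phi> t))"
    and t: "C t \<noteq> 0" "\<phi> t \<in> I"
  shows "y differentiable (at t)" "mink (vel y t) (vel y t) = \<epsilon> * k" "mink (y t) (y t) = f * k"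
proof -
  have "((\<alpha> \<circ> \<phi>) has_vector_derivative (a * (k / (C t)^2)) *\<^sub>R T (\<phi> t)) (at t)"
    using DERIV_diff[OF DERIV_cmult[OF trig_pair_quotient_derivative[OF trig t(1)]] DERIV_const]
      nonnull_frenet_frame_tangent[OF F t(2)]
    unfolding \<phi>
    by (intro vector_diff_chain_at) (simp_all add: has_real_derivative_iff_has_vector_derivative)
  moreover have "((\<lambda>t. C t / a) has_real_derivative - (\<epsilon> * f) * S t / a) (at t)"
    using trig_pairD(2)[OF trig] \<open>0 < a\<close> by (auto intro!: derivative_eq_intros)
  ultimately have y': "(y has_vector_derivative
      (k / C t) *\<^sub>R T (\<phi> t) + (- (\<epsilon> * f) * S t / a) *\<^sub>R \<alpha> (\<phi> t)) (at t)"
    unfolding y using \<open>0 < a\<close> t(1)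
    by (auto dest: has_vector_derivative_scaleR simp: o_def power2_eq_square)
  then show "y differentiable (at t)" by (rule differentiableI_vector)
  from y' have vel: "vel y t = (k / C t) *\<^sub>R T (\<phi> t) + (- (\<epsilon> * f) * S t / a) *\<^sub>R \<alpha> (\<phi> t)"
    unfolding vel_def by (rule vector_derivative_at)
  have \<phi>t: "\<phi> t + c = a * (S t / C t)" by (simp add: \<phi>)
  have TT: "mink (T (\<phi> t)) (T (\<phi> t)) = \<epsilon>"
    and \<alpha>T: "mink (\<alpha> (\<phi> t)) (T (\<phi> t)) = \<epsilon> * (a * (S t / C t))"
    and \<alpha>\<alpha>: "mink (\<alpha> (\<phi> t)) (\<alpha> (\<phi> t)) = \<epsilon> * (a * (S t / C t))^2 + f * a^2"
    using eT[OF t(2)] quadratic_position_tangent_component[OF I F H t(2)] H[OF t(2)] \<phi>t by simp_all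
  have "mink (vel y t) (vel y t) = (\<epsilon> * f * S t / a)^2 * (\<epsilon> * (a * (S t / C t))^2 + f * a^2)
     - 2 * (\<epsilon> * f * S t / a) * (k / C t) * (\<epsilon> * (a * (S t / C t))) + (k / C t)^2 * \<epsilon>"
    unfolding vel using TT \<alpha>T \<alpha>\<alpha>
    by (simp add: mink_linear mink_commute power2_eq_square algebra_simps)
  also have "\<dots> = \<epsilon> * k"
    using units trig_pairD(3)[OF trig, of t] t(1) \<open>0 < a\<close>
    by (simp add: field_simps power2_eq_square) algebra
  finally show "mink (vel y t) (vel y t) = \<epsilon> * k" .
  show "mink (y t) (y t) = f * k"
    unfolding y using \<alpha>\<alpha> units trig_pairD(3)[OF trig, of t] t(1) \<open>0 < a\<close>
    by (simp add: mink_linear field_simps power2_eq_square) algebra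
qed

text \<open>The quotients \<open>(s + c)/a\<close> lie in the domain of \<open>\<psi>\<close> precisely because
  \<open>f k h(\<alpha>,\<alpha>) > 0\<close>.\<close>
lemma quadratic_position_imp_scaled_curve:
  assumes I: "open_interval I" and F: "nonnull_frenet_frame \<alpha> I T N1 N2"
    and eT: "\<And>s. s \<in> I \<Longrightarrow> mink (T s) (T s) = \<epsilon>"
    and H: "\<And>s. s \<in> I \<Longrightarrow> mink (\<alpha> s) (\<alpha> s) = \<epsilon> * (s + c)^2 + f * a^2" and "0 < a"
    and pos: "\<And>s. s \<in> I \<Longrightarrow> 0 < f * k * mink (\<alpha> s) (\<alpha> s)"
    and units: "\<epsilon> * \<epsilon> = 1" "f * f = 1" "k * k = 1"
    and trig: "trig_pair (\<epsilon> * f) k S C" and inv: "trig_quotient_inverse \<psi> D (\<epsilon> * f) k S C"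
  obtains J \<phi> y where "reparam \<phi> J I"
    and "\<And>t. t \<in> J \<Longrightarrow> y differentiable (at t) \<and> mink (vel y t) (vel y t) = \<epsilon> * k \<and>
           mink (y t) (y t) = f * k \<and> C t \<noteq> 0 \<and> \<alpha> (\<phi> t) = (a / C t) *\<^sub>R y t"
proof -
  define \<phi> where "\<phi> = (\<lambda>t. a * (S t / C t) - c)"
  define y where "y = (\<lambda>t. (C t / a) *\<^sub>R \<alpha> (\<phi> t))"
  have inv': "open D" "\<And>t. t \<in> D \<Longrightarrow> C t \<noteq> 0 \<and> \<psi> (S t / C t) = t"
    "\<And>u. 0 < k * (\<epsilon> * f * u^2 + 1) \<Longrightarrow> \<psi> u \<in> D \<and> S (\<psi> u) = u * C (\<psi> u)"
    "continuous_on {u. 0 < k * (\<epsilon> * f * u^2 + 1)} \<psi>"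
    using inv by (auto simp: trig_quotient_inverse_def)
  have range: "0 < k * (\<epsilon> * f * ((s + c) / a)^2 + 1)" if "s \<in> I" for s
  proof -
    have "f * k * mink (\<alpha> s) (\<alpha> s) = a^2 * (k * (\<epsilon> * f * ((s + c) / a)^2 + 1))"
      using H[OF that] units \<open>0 < a\<close> by (simp add: field_simps power2_eq_square)
    then have "0 < a^2 * (k * (\<epsilon> * f * ((s + c) / a)^2 + 1))" using pos[OF that] by linarith
    then show ?thesis using \<open>0 < a\<close> by (metis zero_less_mult_pos zero_less_power)
  qed
  let ?\<psi> = "\<lambda>s. \<psi> ((s + c) / a)"
  have inv1: "?\<psi> s \<in> D \<and> \<phi> (?\<psi> s) = s" if "s \<in> I" for s
    using inv'(3)[OF range[OF that]] inv'(2) \<open>0 < a\<close> by (auto simp: \<phi>_def field_simps)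
  have "continuous_on I (\<lambda>s. (s + c) / a)"
    using \<open>0 < a\<close> by (intro continuous_intros) auto
  then have cont: "continuous_on I ?\<psi>"
    by (rule continuous_on_compose2[OF inv'(4)]) (use range in auto)
  have inv2: "?\<psi> (\<phi> t) = t" if "t \<in> D" "\<phi> t \<in> I" for t
    using inv'(2)[OF that(1)] \<open>0 < a\<close> by (simp add: \<phi>_def)
  have der: "(\<phi> has_real_derivative a * (k / (C t)^2)) (at t) \<and> a * (k / (C t)^2) \<noteq> 0"
    if "t \<in> D" for t
    using DERIV_diff[OF DERIV_cmult[OF trig_pair_quotient_derivative[OF trig]] DERIV_const]
      inv'(2)[OF that] \<open>0 < a\<close> units(3)
    by (auto simp: \<phi>_def)
  note J = reparam_of_inverse[OF I inv'(1) cont inv1 inv2 der]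
  show ?thesis
  proof (rule that[OF J(1)])
    fix t assume "t \<in> ?\<psi> ` I"
    then have t: "C t \<noteq> 0" "\<phi> t \<in> I" using inv1 inv'(2) by auto
    note speed = quadratic_position_scaled_curve_speed[OF I F eT H \<open>0 < a\<close> units trig \<phi>_def y_def t]
    have "\<alpha> (\<phi> t) = (a / C t) *\<^sub>R y t"
      using t(1) \<open>0 < a\<close> by (simp add: y_def)
    with speed t(1) show "y differentiable (at t) \<and> mink (vel y t) (vel y t) = \<epsilon> * k \<and>
           mink (y t) (y t) = f * k \<and> C t \<noteq> 0 \<and> \<alpha> (\<phi> t) = (a / C t) *\<^sub>R y t"
      by blast
  qed
qed

lemma scaled_curve_speed:
  assumes F: "nonnull_frenet_frame \<alpha> I T N1 N2" and "open J" and t: "t \<in> J" "\<phi> t \<in> I"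
    and d: "(\<phi> has_real_derivative d) (at t)" "d \<noteq> 0" and "0 < a"
    and units: "\<epsilon> * \<epsilon> = 1" "f * f = 1" "k * k = 1" and trig: "trig_pair (\<epsilon> * f) k S C"
    and Y: "\<And>t. t \<in> J \<Longrightarrow> y differentiable (at t) \<and> mink (vel y t) (vel y t) = \<epsilon> * k \<and>
              mink (y t) (y t) = f * k \<and> C t \<noteq> 0 \<and> \<alpha> (\<phi> t) = (a / C t) *\<^sub>R y t"
  shows "mink (T (\<phi> t)) (T (\<phi> t)) = \<epsilon> \<and> d^2 = (a / (C t)^2)^2"
proof -
  have Yt: "y differentiable (at t)" "C t \<noteq> 0"
    using Y[OF t(1)] by auto
  have y': "(y has_vector_derivative vel y t) (at t)"
    using Yt(1) unfolding vel_def by (rule vector_derivative_works[THEN iffD1])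
  have "2 * mink (y t) (vel y t) = 0"
  proof (rule derivative_unique_on_open[OF \<open>open J\<close> t(1)])
    show "((\<lambda>t. mink (y t) (y t)) has_real_derivative 2 * mink (y t) (vel y t)) (at t)"
      using mink_has_real_derivative[OF y' y'] by (simp add: mink_commute)
  qed (use Y in auto)
  then have yy': "mink (y t) (vel y t) = 0" by simp
  define g' where "g' = a * (\<epsilon> * f) * S t / (C t)^2"
  have "((\<lambda>t. a / C t) has_real_derivative g') (at t)"
    using trig_pairD(2)[OF trig] Yt(2) unfolding g'_def
    by (auto intro!: derivative_eq_intros simp: power2_eq_square)
  then have "((\<lambda>t. (a / C t) *\<^sub>R y t) has_vector_derivative
      (a / C t) *\<^sub>R vel y t + g' *\<^sub>R y t) (at t)"
    by (intro has_vector_derivative_scaleR y')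
      (simp add: has_real_derivative_iff_has_vector_derivative)
  then have "((\<alpha> \<circ> \<phi>) has_vector_derivative (a / C t) *\<^sub>R vel y t + g' *\<^sub>R y t) (at t)"
    by (rule has_vector_derivative_transform_within_open[OF _ \<open>open J\<close> t(1)]) (simp add: Y)
  moreover have "((\<alpha> \<circ> \<phi>) has_vector_derivative d *\<^sub>R T (\<phi> t)) (at t)"
    using d(1) nonnull_frenet_frame_tangent[OF F t(2)]
    by (intro vector_diff_chain_at) (simp_all add: has_real_derivative_iff_has_vector_derivative)
  ultimately have eq: "d *\<^sub>R T (\<phi> t) = (a / C t) *\<^sub>R vel y t + g' *\<^sub>R y t"
    by (rule vector_derivative_unique_at[rotated])
  have "d^2 * mink (T (\<phi> t)) (T (\<phi> t)) = mink (d *\<^sub>R T (\<phi> t)) (d *\<^sub>R T (\<phi> t))"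
    by (simp add: mink_linear power2_eq_square)
  also have "\<dots> = (a / C t)^2 * (\<epsilon> * k) + g'^2 * (f * k)"
    unfolding eq using Y[OF t(1)] yy'
    by (simp add: mink_linear mink_commute power2_eq_square algebra_simps)
  also have "\<dots> = \<epsilon> * (a / (C t)^2)^2"
    using units trig_pairD(3)[OF trig, of t] Yt(2) \<open>0 < a\<close>
    unfolding g'_def by (simp add: field_simps power2_eq_square) algebra
  finally have "d^2 * mink (T (\<phi> t)) (T (\<phi> t)) = \<epsilon> * (a / (C t)^2)^2" .
  moreover have "\<bar>mink (T (\<phi> t)) (T (\<phi> t))\<bar> = 1"
    using nonnull_frenet_frame_orthonormal[OF F t(2)] by (simp add: mink_orthonormal_def)
  moreover note units(1)
  moreover have "0 < d^2" using d(2) by simp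
  moreover have "0 < (a / (C t)^2)^2" using Yt(2) \<open>0 < a\<close> by simp
  ultimately show ?thesis by (rule unit_sign_cancel)
qed

lemma scaled_curve_imp_quadratic_position:
  assumes I: "open_interval I" and F: "nonnull_frenet_frame \<alpha> I T N1 N2"
    and RP: "reparam \<phi> J I" and "0 < a"
    and units: "\<epsilon> * \<epsilon> = 1" "f * f = 1" "k * k = 1" and trig: "trig_pair (\<epsilon> * f) k S C"
    and Y: "\<And>t. t \<in> J \<Longrightarrow> y differentiable (at t) \<and> mink (vel y t) (vel y t) = \<epsilon> * k \<and>
              mink (y t) (y t) = f * k \<and> C t \<noteq> 0 \<and> \<alpha> (\<phi> t) = (a / C t) *\<^sub>R y t"
  obtains c where "\<And>s. s \<in> I \<Longrightarrow> mink (T s) (T s) = \<epsilon>"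
    and "\<And>s. s \<in> I \<Longrightarrow> mink (\<alpha> s) (\<alpha> s) = \<epsilon> * (s + c)^2 + f * a^2"
    and "\<And>s. s \<in> I \<Longrightarrow> 0 < f * k * mink (\<alpha> s) (\<alpha> s)"
proof -
  have J: "open J" "is_interval J" "bij_betw \<phi> J I"
    using RP by (auto simp: reparam_def open_interval_def)
  have \<phi>J: "\<phi> t \<in> I" if "t \<in> J" for t using J(3) that by (auto simp: bij_betw_def)
  obtain \<phi>' where \<phi>': "\<And>t. t \<in> J \<Longrightarrow> (\<phi> has_real_derivative \<phi>' t) (at t) \<and> \<phi>' t \<noteq> 0"
    using RP unfolding reparam_def by metis
  have C: "C t \<noteq> 0" if "t \<in> J" for t
    using Y[OF that] by blast
  have speed: "mink (T (\<phi> t)) (T (\<phi> t)) = \<epsilon> \<and> (\<phi>' t)^2 = (a / (C t)^2)^2" if "t \<in> J" for t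
    using F J(1) that \<phi>J[OF that] conjunct1[OF \<phi>'[OF that]] conjunct2[OF \<phi>'[OF that]]
      \<open>0 < a\<close> units trig Y
    by (rule scaled_curve_speed)
  define G where "G = (\<lambda>t. k * a * (S t / C t))"
  have G: "(G has_real_derivative a / (C t)^2) (at t)" if "t \<in> J" for t
  proof -
    have "(G has_real_derivative k * a * (k / (C t)^2)) (at t)"
      unfolding G_def using C[OF that] by (intro DERIV_cmult trig_pair_quotient_derivative[OF trig])
    moreover have "k * a * (k / (C t)^2) = a / (C t)^2"
      using units(3) C[OF that] by (simp add: field_simps; algebra)
    ultimately show ?thesis by (simp only:)
  qed
  have P: "0 < a / (C t)^2" if "t \<in> J" for t
    using C[OF that] \<open>0 < a\<close> by simp
  have sq: "(\<phi>' t)^2 = (a / (C t)^2)^2" if "t \<in> J" for t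
    using speed[OF that] by blast
  have "\<exists>\<sigma> d. \<sigma> * \<sigma> = 1 \<and> (\<forall>t\<in>J. \<phi> t = \<sigma> * G t + d)"
    using J(2) \<phi>' G P sq by (rule derivative_sq_eq_imp_signed_primitive)
  then obtain \<sigma> d where \<sigma>: "\<sigma> * \<sigma> = 1" and d: "\<And>t. t \<in> J \<Longrightarrow> \<phi> t = \<sigma> * G t + d"
    by blast
  have \<alpha>\<alpha>: "mink (\<alpha> (\<phi> t)) (\<alpha> (\<phi> t)) = f * k * (a / C t)^2" if "t \<in> J" for t
    using Y[OF that] by (simp add: mink_linear power2_eq_square)
  show ?thesis
  proof (rule that[of "- d"])
    fix s assume "s \<in> I"
    then obtain t where t: "t \<in> J" "s = \<phi> t"
      using J(3) by (auto simp: bij_betw_def)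
    show "mink (T s) (T s) = \<epsilon>" using speed[OF t(1)] t(2) by simp
    have "\<epsilon> * (\<phi> t + - d)^2 + f * a^2 = f * k * (a / C t)^2"
      unfolding d[OF t(1)] G_def using units \<sigma> trig_pairD(3)[OF trig, of t] C[OF t(1)]
      by (simp add: field_simps power2_eq_square) algebra
    then show "mink (\<alpha> s) (\<alpha> s) = \<epsilon> * (s + - d)^2 + f * a^2"
      using \<alpha>\<alpha>[OF t(1)] t(2) by simp
    have "f * k * (f * k * (a / C t)^2) = (a / C t)^2"
      using units by algebra
    moreover have "0 < (a / C t)^2" using C[OF t(1)] \<open>0 < a\<close> by simp
    ultimately show "0 < f * k * mink (\<alpha> s) (\<alpha> s)"
      unfolding t(2) \<alpha>\<alpha>[OF t(1)] by (simp only:)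
  qed
qed

lemma rectifying_iff_scaled_curve:
  assumes I: "open_interval I" and F: "nonnull_frenet_frame \<alpha> I T N1 N2"
    and trig: "trig_pair \<rho> k S C" and inv: "trig_quotient_inverse \<psi> D \<rho> k S C"
    and units: "\<epsilon> * \<epsilon> = 1" "f * f = 1" "k * k = 1" and \<rho>: "\<rho> = \<epsilon> * f"
  shows "(rectifying_curve \<alpha> I T N2 \<and>
      (\<forall>s\<in>I. mink (T s) (T s) = \<epsilon> \<and> mink (N2 s) (N2 s) = f \<and> 0 < f * k * mink (\<alpha> s) (\<alpha> s)))
    \<longleftrightarrow> (\<exists>J \<phi> a y. reparam \<phi> J I \<and> 0 < a \<and> (\<forall>t\<in>J. y differentiable (at t) \<and>
           mink (vel y t) (vel y t) = \<epsilon> * k \<and> mink (y t) (y t) = f * k \<and> C t \<noteq> 0 \<and>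
           \<alpha> (\<phi> t) = (a / C t) *\<^sub>R y t))"
    (is "?L \<longleftrightarrow> ?R")
proof
  assume ?L
  then have R: "rectifying_curve \<alpha> I T N2" and eT: "\<And>s. s \<in> I \<Longrightarrow> mink (T s) (T s) = \<epsilon>"
    and N2: "\<And>s. s \<in> I \<Longrightarrow> mink (N2 s) (N2 s) = f"
    and pos: "\<And>s. s \<in> I \<Longrightarrow> 0 < f * k * mink (\<alpha> s) (\<alpha> s)" by auto
  obtain c K where H: "\<And>s. s \<in> I \<Longrightarrow> mink (\<alpha> s) (\<alpha> s) = \<epsilon> * (s + c)^2 + K"
    using rectifying_imp_quadratic_position[OF I F eT units(1) R] by blast
  obtain s where "s \<in> I" using I by (auto simp: open_interval_def)
  then have "0 < K * f"
    using quadratic_position_imp_rectifying(2)[OF I F eT units(1) H] N2 by metis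
  define a where "a = sqrt (K * f)"
  have "0 < a" "K = f * a^2"
    using \<open>0 < K * f\<close> units(2) by (auto simp: a_def algebra_simps)
  then obtain J \<phi> y where "reparam \<phi> J I"
    and "\<And>t. t \<in> J \<Longrightarrow> y differentiable (at t) \<and> mink (vel y t) (vel y t) = \<epsilon> * k \<and>
           mink (y t) (y t) = f * k \<and> C t \<noteq> 0 \<and> \<alpha> (\<phi> t) = (a / C t) *\<^sub>R y t"
    using quadratic_position_imp_scaled_curve[OF I F eT _ _ pos units
        trig[unfolded \<rho>] inv[unfolded \<rho>]] H
    by metis
  with \<open>0 < a\<close> show ?R by blast
next
  assume ?R
  then obtain J \<phi> a y where RP: "reparam \<phi> J I" and "0 < a"
    and Y: "\<And>t. t \<in> J \<Longrightarrow> y differentiable (at t) \<and> mink (vel y t) (vel y t) = \<epsilon> * k \<and>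
           mink (y t) (y t) = f * k \<and> C t \<noteq> 0 \<and> \<alpha> (\<phi> t) = (a / C t) *\<^sub>R y t"
    by blast
  obtain c where eT: "\<And>s. s \<in> I \<Longrightarrow> mink (T s) (T s) = \<epsilon>"
    and H: "\<And>s. s \<in> I \<Longrightarrow> mink (\<alpha> s) (\<alpha> s) = \<epsilon> * (s + c)^2 + f * a^2"
    and pos: "\<And>s. s \<in> I \<Longrightarrow> 0 < f * k * mink (\<alpha> s) (\<alpha> s)"
    using scaled_curve_imp_quadratic_position[OF I F RP \<open>0 < a\<close> units trig[unfolded \<rho>] Y] by metis
  have rect: "rectifying_curve \<alpha> I T N2"
    using I F eT units(1) H by (rule quadratic_position_imp_rectifying)
  have "mink (N2 s) (N2 s) = f" if "s \<in> I" for s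
  proof -
    have "\<bar>mink (N2 s) (N2 s)\<bar> = 1"
      using nonnull_frenet_frame_orthonormal[OF F that] by (simp add: mink_orthonormal_def)
    moreover have "0 < f * mink (N2 s) (N2 s)"
      using quadratic_position_imp_rectifying(2)[OF I F eT units(1) H that] \<open>0 < a\<close>
      by (auto simp: zero_less_mult_iff mult_less_0_iff)
    ultimately show ?thesis using units(2) by (auto simp: square_eq_1_iff abs_if split: if_splits)
  qed
  with rect eT pos show ?L by blast
qed

section \<open>The five cases\<close>

lemma nonnull_frenet_frame_spacelike_plane_iff:
  assumes "nonnull_frenet_frame \<alpha> I T N1 N2" "s \<in> I"
  shows "spacelike_plane (T s) (N2 s) \<longleftrightarrow> mink (T s) (T s) = 1 \<and> mink (N2 s) (N2 s) = 1"
  using nonnull_frenet_frame_orthonormal[OF assms]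
  by (auto simp: spacelike_plane_def mink_orthonormal_def abs_if split: if_splits)

lemma nonnull_frenet_frame_timelike_plane_iff:
  assumes "nonnull_frenet_frame \<alpha> I T N1 N2" "s \<in> I"
  shows "timelike_plane (T s) (N2 s) \<longleftrightarrow> mink (N2 s) (N2 s) = - mink (T s) (T s)"
  using nonnull_frenet_frame_orthonormal[OF assms]
  by (auto simp: timelike_plane_def mink_orthonormal_def abs_if split: if_splits)

lemma nonnull_frenet_frame_vel:
  assumes "nonnull_frenet_frame \<alpha> I T N1 N2" "s \<in> I"
  shows "\<alpha> differentiable (at s)" "vel \<alpha> s = T s"
  using nonnull_frenet_frame_tangent[OF assms]
  by (auto simp: vel_def intro: differentiableI_vector vector_derivative_at)

lemma nonnull_frenet_frame_spacelike_curve_iff: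
  assumes "nonnull_frenet_frame \<alpha> I T N1 N2"
  shows "spacelike_curve \<alpha> I \<longleftrightarrow> (\<forall>s\<in>I. mink (T s) (T s) = 1)"
proof -
  have "(\<alpha> differentiable (at s) \<and> 0 < mink (vel \<alpha> s) (vel \<alpha> s)) \<longleftrightarrow> mink (T s) (T s) = 1"
    if "s \<in> I" for s
    using nonnull_frenet_frame_vel[OF assms that] nonnull_frenet_frame_orthonormal[OF assms that]
    by (auto simp: mink_orthonormal_def abs_if split: if_splits)
  then show ?thesis unfolding spacelike_curve_def by auto
qed

lemma nonnull_frenet_frame_timelike_curve_iff:
  assumes "nonnull_frenet_frame \<alpha> I T N1 N2"
  shows "timelike_curve \<alpha> I \<longleftrightarrow> (\<forall>s\<in>I. mink (T s) (T s) = -1)"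
proof -
  have "(\<alpha> differentiable (at s) \<and> mink (vel \<alpha> s) (vel \<alpha> s) < 0) \<longleftrightarrow> mink (T s) (T s) = -1"
    if "s \<in> I" for s
    using nonnull_frenet_frame_vel[OF assms that] nonnull_frenet_frame_orthonormal[OF assms that]
    by (auto simp: mink_orthonormal_def abs_if split: if_splits)
  then show ?thesis unfolding timelike_curve_def by auto
qed

lemma rectifying_spacelike_plane_iff:
  assumes I: "open_interval I" and F: "nonnull_frenet_frame \<alpha> I T N1 N2"
  shows "(rectifying_curve \<alpha> I T N2 \<and> (\<forall>s\<in>I. spacelike_plane (T s) (N2 s)))
      \<longleftrightarrow> (\<exists>J \<phi> a y. reparam \<phi> J I \<and> a > 0 \<and> unit_speed_spacelike y J \<and>
             (\<forall>t\<in>J. y t \<in> pseudosphere \<and> cos t \<noteq> 0 \<and> \<alpha> (\<phi> t) = (a / cos t) *\<^sub>R y t))"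
    (is "_ \<longleftrightarrow> ?R")
proof -
  have "(rectifying_curve \<alpha> I T N2 \<and> (\<forall>s\<in>I. spacelike_plane (T s) (N2 s))) \<longleftrightarrow>
    (rectifying_curve \<alpha> I T N2 \<and> (\<forall>s\<in>I. mink (T s) (T s) = 1 \<and> mink (N2 s) (N2 s) = 1 \<and>
       0 < 1 * 1 * mink (\<alpha> s) (\<alpha> s)))"
    using rectifying_spacelike_plane_position_spacelike[OF I F]
      nonnull_frenet_frame_spacelike_plane_iff[OF F] by auto
  also have "\<dots> \<longleftrightarrow> (\<exists>J \<phi> a y. reparam \<phi> J I \<and> 0 < a \<and> (\<forall>t\<in>J. y differentiable (at t) \<and>
           mink (vel y t) (vel y t) = 1 * 1 \<and> mink (y t) (y t) = 1 * 1 \<and> cos t \<noteq> 0 \<and>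
           \<alpha> (\<phi> t) = (a / cos t) *\<^sub>R y t))"
    by (rule rectifying_iff_scaled_curve[OF I F trig_pair_sin_cos trig_quotient_inverse_arctan])
      simp_all
  also have "\<dots> \<longleftrightarrow> ?R"
    by (simp add: unit_speed_spacelike_def pseudosphere_def ball_conj_distrib conj_assoc)
  finally show ?thesis .
qed

lemma spacelike_rectifying_timelike_plane_spacelike_position_iff:
  assumes I: "open_interval I" and F: "nonnull_frenet_frame \<alpha> I T N1 N2"
  shows "((spacelike_curve \<alpha> I \<and> rectifying_curve \<alpha> I T N2 \<and> (\<forall>s\<in>I. timelike_plane (T s) (N2 s))
        \<and> (\<forall>s\<in>I. mink (\<alpha> s) (\<alpha> s) > 0))
      \<longleftrightarrow> (\<exists>J \<phi> a y. reparam \<phi> J I \<and> a > 0 \<and> unit_speed_timelike y J \<and>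
             (\<forall>t\<in>J. y t \<in> pseudosphere \<and> sinh t \<noteq> 0 \<and> \<alpha> (\<phi> t) = (a / sinh t) *\<^sub>R y t)))"
    (is "_ \<longleftrightarrow> ?R")
proof -
  have "(spacelike_curve \<alpha> I \<and> rectifying_curve \<alpha> I T N2 \<and> (\<forall>s\<in>I. timelike_plane (T s) (N2 s))
        \<and> (\<forall>s\<in>I. mink (\<alpha> s) (\<alpha> s) > 0)) \<longleftrightarrow>
    (rectifying_curve \<alpha> I T N2 \<and> (\<forall>s\<in>I. mink (T s) (T s) = 1 \<and> mink (N2 s) (N2 s) = -1 \<and>
       0 < -1 * -1 * mink (\<alpha> s) (\<alpha> s)))"
    by (auto simp: nonnull_frenet_frame_spacelike_curve_iff[OF F]
        nonnull_frenet_frame_timelike_plane_iff[OF F])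
  also have "\<dots> \<longleftrightarrow> (\<exists>J \<phi> a y. reparam \<phi> J I \<and> 0 < a \<and> (\<forall>t\<in>J. y differentiable (at t) \<and>
           mink (vel y t) (vel y t) = 1 * -1 \<and> mink (y t) (y t) = -1 * -1 \<and> sinh t \<noteq> 0 \<and>
           \<alpha> (\<phi> t) = (a / sinh t) *\<^sub>R y t))"
    by (rule rectifying_iff_scaled_curve[OF I F trig_pair_cosh_sinh trig_quotient_inverse_coth])
      simp_all
  also have "\<dots> \<longleftrightarrow> ?R"
    by (simp add: unit_speed_timelike_def pseudosphere_def ball_conj_distrib conj_assoc)
  finally show ?thesis .
qed

lemma timelike_rectifying_timelike_plane_timelike_position_iff:
  assumes I: "open_interval I" and F: "nonnull_frenet_frame \<alpha> I T N1 N2"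
  shows "((timelike_curve \<alpha> I \<and> rectifying_curve \<alpha> I T N2 \<and> (\<forall>s\<in>I. timelike_plane (T s) (N2 s))
        \<and> (\<forall>s\<in>I. mink (\<alpha> s) (\<alpha> s) < 0))
      \<longleftrightarrow> (\<exists>J \<phi> a y. reparam \<phi> J I \<and> a > 0 \<and> unit_speed_spacelike y J \<and>
             (\<forall>t\<in>J. y t \<in> pseudohyperbolic \<and> sinh t \<noteq> 0 \<and> \<alpha> (\<phi> t) = (a / sinh t) *\<^sub>R y t)))"
    (is "_ \<longleftrightarrow> ?R")
proof -
  have "(timelike_curve \<alpha> I \<and> rectifying_curve \<alpha> I T N2 \<and> (\<forall>s\<in>I. timelike_plane (T s) (N2 s))
        \<and> (\<forall>s\<in>I. mink (\<alpha> s) (\<alpha> s) < 0)) \<longleftrightarrow>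
    (rectifying_curve \<alpha> I T N2 \<and> (\<forall>s\<in>I. mink (T s) (T s) = -1 \<and> mink (N2 s) (N2 s) = 1 \<and>
       0 < 1 * -1 * mink (\<alpha> s) (\<alpha> s)))"
    by (auto simp: nonnull_frenet_frame_timelike_curve_iff[OF F]
        nonnull_frenet_frame_timelike_plane_iff[OF F])
  also have "\<dots> \<longleftrightarrow> (\<exists>J \<phi> a y. reparam \<phi> J I \<and> 0 < a \<and> (\<forall>t\<in>J. y differentiable (at t) \<and>
           mink (vel y t) (vel y t) = -1 * -1 \<and> mink (y t) (y t) = 1 * -1 \<and> sinh t \<noteq> 0 \<and>
           \<alpha> (\<phi> t) = (a / sinh t) *\<^sub>R y t))"
    by (rule rectifying_iff_scaled_curve[OF I F trig_pair_cosh_sinh trig_quotient_inverse_coth])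
      simp_all
  also have "\<dots> \<longleftrightarrow> ?R"
    by (simp add: unit_speed_spacelike_def pseudohyperbolic_def ball_conj_distrib conj_assoc)
  finally show ?thesis .
qed

lemma spacelike_rectifying_timelike_plane_timelike_position_iff:
  assumes I: "open_interval I" and F: "nonnull_frenet_frame \<alpha> I T N1 N2"
  shows "((spacelike_curve \<alpha> I \<and> rectifying_curve \<alpha> I T N2 \<and> (\<forall>s\<in>I. timelike_plane (T s) (N2 s))
        \<and> (\<forall>s\<in>I. mink (\<alpha> s) (\<alpha> s) < 0))
      \<longleftrightarrow> (\<exists>J \<phi> a y. reparam \<phi> J I \<and> a > 0 \<and> unit_speed_spacelike y J \<and>
             (\<forall>t\<in>J. y t \<in> pseudohyperbolic \<and> \<alpha> (\<phi> t) = (a / cosh t) *\<^sub>R y t)))"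
    (is "_ \<longleftrightarrow> ?R")
proof -
  have "(spacelike_curve \<alpha> I \<and> rectifying_curve \<alpha> I T N2 \<and> (\<forall>s\<in>I. timelike_plane (T s) (N2 s))
        \<and> (\<forall>s\<in>I. mink (\<alpha> s) (\<alpha> s) < 0)) \<longleftrightarrow>
    (rectifying_curve \<alpha> I T N2 \<and> (\<forall>s\<in>I. mink (T s) (T s) = 1 \<and> mink (N2 s) (N2 s) = -1 \<and>
       0 < -1 * 1 * mink (\<alpha> s) (\<alpha> s)))"
    by (auto simp: nonnull_frenet_frame_spacelike_curve_iff[OF F]
        nonnull_frenet_frame_timelike_plane_iff[OF F])
  also have "\<dots> \<longleftrightarrow> (\<exists>J \<phi> a y. reparam \<phi> J I \<and> 0 < a \<and> (\<forall>t\<in>J. y differentiable (at t) \<and>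
           mink (vel y t) (vel y t) = 1 * 1 \<and> mink (y t) (y t) = -1 * 1 \<and> cosh t \<noteq> 0 \<and>
           \<alpha> (\<phi> t) = (a / cosh t) *\<^sub>R y t))"
    by (rule rectifying_iff_scaled_curve[OF I F trig_pair_sinh_cosh trig_quotient_inverse_tanh])
      simp_all
  also have "\<dots> \<longleftrightarrow> ?R"
    by (simp add: unit_speed_spacelike_def pseudohyperbolic_def ball_conj_distrib conj_assoc)
  finally show ?thesis .
qed

lemma timelike_rectifying_timelike_plane_spacelike_position_iff:
  assumes I: "open_interval I" and F: "nonnull_frenet_frame \<alpha> I T N1 N2"
  shows "((timelike_curve \<alpha> I \<and> rectifying_curve \<alpha> I T N2 \<and> (\<forall>s\<in>I. timelike_plane (T s) (N2 s))
        \<and> (\<forall>s\<in>I. mink (\<alpha> s) (\<alpha> s) > 0))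
      \<longleftrightarrow> (\<exists>J \<phi> a y. reparam \<phi> J I \<and> a > 0 \<and> unit_speed_timelike y J \<and>
             (\<forall>t\<in>J. y t \<in> pseudosphere \<and> \<alpha> (\<phi> t) = (a / cosh t) *\<^sub>R y t)))"
    (is "_ \<longleftrightarrow> ?R")
proof -
  have "(timelike_curve \<alpha> I \<and> rectifying_curve \<alpha> I T N2 \<and> (\<forall>s\<in>I. timelike_plane (T s) (N2 s))
        \<and> (\<forall>s\<in>I. mink (\<alpha> s) (\<alpha> s) > 0)) \<longleftrightarrow>
    (rectifying_curve \<alpha> I T N2 \<and> (\<forall>s\<in>I. mink (T s) (T s) = -1 \<and> mink (N2 s) (N2 s) = 1 \<and>
       0 < 1 * 1 * mink (\<alpha> s) (\<alpha> s)))"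
    by (auto simp: nonnull_frenet_frame_timelike_curve_iff[OF F]
        nonnull_frenet_frame_timelike_plane_iff[OF F])
  also have "\<dots> \<longleftrightarrow> (\<exists>J \<phi> a y. reparam \<phi> J I \<and> 0 < a \<and> (\<forall>t\<in>J. y differentiable (at t) \<and>
           mink (vel y t) (vel y t) = -1 * 1 \<and> mink (y t) (y t) = 1 * 1 \<and> cosh t \<noteq> 0 \<and>
           \<alpha> (\<phi> t) = (a / cosh t) *\<^sub>R y t))"
    by (rule rectifying_iff_scaled_curve[OF I F trig_pair_sinh_cosh trig_quotient_inverse_tanh])
      simp_all
  also have "\<dots> \<longleftrightarrow> ?R"
    by (simp add: unit_speed_timelike_def pseudosphere_def ball_conj_distrib conj_assoc)
  finally show ?thesis .
qed

theorem theorem3p4: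
  fixes \<alpha> T N1 N2 :: "real \<Rightarrow> real^3" and I :: "real set"
  assumes "open_interval I"
    and "unit_speed \<alpha> I"
    and "nonnull_frenet_frame \<alpha> I T N1 N2"
  shows
   "((rectifying_curve \<alpha> I T N2 \<and> (\<forall>s\<in>I. spacelike_plane (T s) (N2 s)))
      \<longleftrightarrow> (\<exists>J \<phi> a y. reparam \<phi> J I \<and> a > 0 \<and> unit_speed_spacelike y J \<and>
             (\<forall>t\<in>J. y t \<in> pseudosphere \<and> cos t \<noteq> 0 \<and> \<alpha> (\<phi> t) = (a / cos t) *\<^sub>R y t)))
    \<and>
    ((spacelike_curve \<alpha> I \<and> rectifying_curve \<alpha> I T N2 \<and> (\<forall>s\<in>I. timelike_plane (T s) (N2 s))
        \<and> (\<forall>s\<in>I. mink (\<alpha> s) (\<alpha> s) > 0))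
      \<longleftrightarrow> (\<exists>J \<phi> a y. reparam \<phi> J I \<and> a > 0 \<and> unit_speed_timelike y J \<and>
             (\<forall>t\<in>J. y t \<in> pseudosphere \<and> sinh t \<noteq> 0 \<and> \<alpha> (\<phi> t) = (a / sinh t) *\<^sub>R y t)))
    \<and>
    ((timelike_curve \<alpha> I \<and> rectifying_curve \<alpha> I T N2 \<and> (\<forall>s\<in>I. timelike_plane (T s) (N2 s))
        \<and> (\<forall>s\<in>I. mink (\<alpha> s) (\<alpha> s) < 0))
      \<longleftrightarrow> (\<exists>J \<phi> a y. reparam \<phi> J I \<and> a > 0 \<and> unit_speed_spacelike y J \<and>
             (\<forall>t\<in>J. y t \<in> pseudohyperbolic \<and> sinh t \<noteq> 0 \<and> \<alpha> (\<phi> t) = (a / sinh t) *\<^sub>R y t)))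
    \<and>
    ((spacelike_curve \<alpha> I \<and> rectifying_curve \<alpha> I T N2 \<and> (\<forall>s\<in>I. timelike_plane (T s) (N2 s))
        \<and> (\<forall>s\<in>I. mink (\<alpha> s) (\<alpha> s) < 0))
      \<longleftrightarrow> (\<exists>J \<phi> a y. reparam \<phi> J I \<and> a > 0 \<and> unit_speed_spacelike y J \<and>
             (\<forall>t\<in>J. y t \<in> pseudohyperbolic \<and> \<alpha> (\<phi> t) = (a / cosh t) *\<^sub>R y t)))
    \<and>
    ((timelike_curve \<alpha> I \<and> rectifying_curve \<alpha> I T N2 \<and> (\<forall>s\<in>I. timelike_plane (T s) (N2 s))
        \<and> (\<forall>s\<in>I. mink (\<alpha> s) (\<alpha> s) > 0))
      \<longleftrightarrow> (\<exists>J \<phi> a y. reparam \<phi> J I \<and> a > 0 \<and> unit_speed_timelike y J \<and>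
             (\<forall>t\<in>J. y t \<in> pseudosphere \<and> \<alpha> (\<phi> t) = (a / cosh t) *\<^sub>R y t)))"
  using assms(1,3)
  by (intro conjI rectifying_spacelike_plane_iff
      spacelike_rectifying_timelike_plane_spacelike_position_iff
      timelike_rectifying_timelike_plane_timelike_position_iff
      spacelike_rectifying_timelike_plane_timelike_position_iff
      timelike_rectifying_timelike_plane_spacelike_position_iff)

end
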